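(* Let $\tau\in\mathcal{T}$. Let $\mathbf{k}(\tau)$ be the number of edges of $\tau$ labelled $I'$ and $\mathbf{l}(\tau)$ the number of leaves of $\tau$. Then $\mathbf{l}(\tau)+\mathbf{k}(\tau)$ is odd.
   Context: $\mathcal{T}$ is the smallest set of rooted trees with edges labelled $I$ or $I'$ containing the single-vertex tree $\bullet$ and such that for $\tau_1,\tau_2,\tau_3\in\mathcal{T}$ the tree $I(\tau_1)I(\tau_2)I(\tau_3)$ (a new root joined to the roots of $\tau_1,\tau_2,\tau_3$ by edges labelled $I$) is in $\mathcal{T}$, and for $\tau_1,\tau_2\in\mathcal{T}$ the tree $I(\tau_1)I'(\tau_2)$ (a new root joined to the root of $\tau_1$ by an $I$-edge and to the root of $\tau_2$ by an $I'$-edge) is in $\mathcal{T}$. A leaf is a non-root vertex of degree 1, or the root of the single-vertex tree. *)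

theory Defs
  imports Main
begin

text \<open>Trees of the class T: the single vertex, a root with three I-children,
  or a root with one I-child (first argument) and one I'-child (second argument).\<close>
datatype tr = Dot | Node3 tr tr tr | NodeIP tr tr

fun kI :: "tr \<Rightarrow> nat" where
  "kI Dot = 0"
| "kI (Node3 a b c) = kI a + kI b + kI c"
| "kI (NodeIP a b) = kI a + kI b + 1"

fun nchildren :: "tr \<Rightarrow> nat" where
  "nchildren Dot = 0"
| "nchildren (Node3 _ _ _) = 3"
| "nchildren (NodeIP _ _) = 2"

text \<open>Number of non-root vertices of degree 1 (degree = children + 1 for the parent edge).\<close>
fun nonroot_leaves :: "tr \<Rightarrow> nat" where
  "nonroot_leaves Dot = 0"
| "nonroot_leaves (Node3 a b c) =
     (\<Sum>t\<leftarrow>[a,b,c]. (if nchildren t + 1 = 1 then 1 else 0) + nonroot_leaves t)"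
| "nonroot_leaves (NodeIP a b) =
     (\<Sum>t\<leftarrow>[a,b]. (if nchildren t + 1 = 1 then 1 else 0) + nonroot_leaves t)"

definition lv :: "tr \<Rightarrow> nat" where
  "lv t = (if t = Dot then 1 else nonroot_leaves t)"

end

theory Submission
  imports Defs
begin

text \<open>The leaf count is additive over the subtrees of the root, so the parity of
  \<open>lv + kI\<close> is the sum of the children's parities, plus one for an \<open>I'\<close>-edge.
  Three odd summands, or two odd summands plus one, again give an odd number.\<close>

lemma lv_as_child: "(if nchildren t + 1 = 1 then 1 else 0) + nonroot_leaves t = lv t"
  by (cases t) (simp_all add: lv_def)

lemma lv_Node3: "lv (Node3 a b c) = lv a + lv b + lv c"
  by (subst lv_def)
    (simp only: tr.distinct if_False nonroot_leaves.simps list.map sum_list_simps lv_as_child)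

lemma lv_NodeIP: "lv (NodeIP a b) = lv a + lv b"
  by (subst lv_def)
    (simp only: tr.distinct if_False nonroot_leaves.simps list.map sum_list_simps lv_as_child)

theorem lemma3p25:
  fixes \<tau> :: tr
  shows "odd (lv \<tau> + kI \<tau>)"
proof (induction \<tau>)
  case Dot
  then show ?case by (simp add: lv_def)
next
  case (Node3 a b c)
  then show ?case by (simp add: lv_Node3)
next
  case (NodeIP a b)
  then show ?case by (simp add: lv_NodeIP)
qed

end
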